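(* For all $\alpha,\beta\ge1$ and $d\in\mathbb{Z}\setminus\{0\}$, $\widetilde{\epsilon'_d}(\mathcal{R}_{\alpha,\beta})\subset\mathcal{Q}_{\alpha,\beta}$.
   Context: Let $k$ be a field of characteristic zero, $n\ge3$, $k[t,\mathbf{x}]=k[t,x_1,\ldots,x_n]$. Let $\widetilde{D'}=\sum_{j=2}^{n}(j-1)\,x_{j-1}\,\partial/\partial x_j$ as a derivation of $k[t,\mathbf{x}]$ killing $t$, and for $d\in k$, $\widetilde{\epsilon'_d}=\exp(d\widetilde{D'})$, $\exp E(g)=\sum_{i\ge0}E^i(g)/i!$. For nonzero $p=\sum u_{i_0,\ldots,i_n}t^{i_0}x_1^{i_1}\cdots x_n^{i_n}$, $\mathrm{supp}(p)$ is the set of exponent vectors with nonzero coefficient, $\deg_{\mathbf w}(p)=\max\{\sum_j i_jw_j:(i_0,\ldots,i_n)\in\mathrm{supp}(p)\}$, and $\mathrm{lt}(p)$ is the leading term for the lexicographic order with $t>x_1>\cdots>x_n$. Let $\mathbf{w}_3=(0,1,\ldots,1)$ (weight $0$ on $t$, $1$ on each $x_j$). For $\alpha,\beta\ge1$: $\mathcal{Q}_{\alpha,\beta}$ is the set of nonzero $p$ with $\deg_{\mathbf{w}_3}(p)\le\beta$ and $\mathrm{lt}(p)\in k^*t^\alpha x_1^\beta$; $\mathcal{R}_{\alpha,\beta}$ is the set of nonzero $p$ with $\deg_{\mathbf{w}_3}(p)\le\beta$ and $\mathrm{lt}(p)\in k^*t^\alpha x_n^\beta$. *)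

theory Defs
  imports Main "HOL-Library.Poly_Mapping"
begin

text \<open>An exponent vector is a finitely supported map
nat =>0 nat; index 0 is the exponent of t, index j (1 <= j <= n) that of x_j.\<close>


definition in_ring :: "nat \<Rightarrow> ((nat \<Rightarrow>\<^sub>0 nat) \<Rightarrow>\<^sub>0 'k::zero) \<Rightarrow> bool" where
  "in_ring n p \<longleftrightarrow> (\<forall>m \<in> Poly_Mapping.keys p. Poly_Mapping.keys (m :: nat \<Rightarrow>\<^sub>0 nat) \<subseteq> {0..n})"

text \<open>The derivation D' = sum_{j=2}^n (j-1) x_{j-1} d/dx_j (kills t).\<close>
definition Dtil :: "nat \<Rightarrow> ((nat \<Rightarrow>\<^sub>0 nat) \<Rightarrow>\<^sub>0 'k::field_char_0) \<Rightarrow> ((nat \<Rightarrow>\<^sub>0 nat) \<Rightarrow>\<^sub>0 'k)" where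
  "Dtil n p = (\<Sum>m \<in> Poly_Mapping.keys p. \<Sum>j \<in> {2..n}.
      Poly_Mapping.single (m - Poly_Mapping.single j 1 + Poly_Mapping.single (j - 1) 1)
        (of_nat (j - 1) * of_nat (Poly_Mapping.lookup m j) * Poly_Mapping.lookup p m))"

text \<open>exp E (g) = sum_i E^i(g)/i!, for E locally nilpotent (the sum ranges over
the finitely many i with E^i(g) nonzero; all other terms vanish).\<close>
definition expder :: "(((nat \<Rightarrow>\<^sub>0 nat) \<Rightarrow>\<^sub>0 'k::field_char_0) \<Rightarrow> ((nat \<Rightarrow>\<^sub>0 nat) \<Rightarrow>\<^sub>0 'k)) \<Rightarrow> ((nat \<Rightarrow>\<^sub>0 nat) \<Rightarrow>\<^sub>0 'k) \<Rightarrow> ((nat \<Rightarrow>\<^sub>0 nat) \<Rightarrow>\<^sub>0 'k)" where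
  "expder E g = (\<Sum>i \<in> {i. (E ^^ i) g \<noteq> 0}.
      Poly_Mapping.single 0 (1 / fact i) * (E ^^ i) g)"

definition eps_til :: "nat \<Rightarrow> 'k::field_char_0 \<Rightarrow> ((nat \<Rightarrow>\<^sub>0 nat) \<Rightarrow>\<^sub>0 'k) \<Rightarrow> ((nat \<Rightarrow>\<^sub>0 nat) \<Rightarrow>\<^sub>0 'k)" where
  "eps_til n d = expder (\<lambda>g. Poly_Mapping.single 0 d * Dtil n g)"

definition deg_w3 :: "nat \<Rightarrow> ((nat \<Rightarrow>\<^sub>0 nat) \<Rightarrow>\<^sub>0 'k::zero) \<Rightarrow> nat" where
  "deg_w3 n p = Max ((\<lambda>m. \<Sum>j \<in> {1..n}. Poly_Mapping.lookup m j) ` Poly_Mapping.keys p)"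

text \<open>Lexicographic order with t > x_1 > ... > x_n (indices 0,1,...,n).\<close>
definition lex_less :: "nat \<Rightarrow> (nat \<Rightarrow>\<^sub>0 nat) \<Rightarrow> (nat \<Rightarrow>\<^sub>0 nat) \<Rightarrow> bool" where
  "lex_less n a b \<longleftrightarrow> (\<exists>i \<le> n. Poly_Mapping.lookup a i < Poly_Mapping.lookup b i \<and> (\<forall>j < i. Poly_Mapping.lookup a j = Poly_Mapping.lookup b j))"

definition lead_exp_is :: "nat \<Rightarrow> ((nat \<Rightarrow>\<^sub>0 nat) \<Rightarrow>\<^sub>0 'k::zero) \<Rightarrow> (nat \<Rightarrow>\<^sub>0 nat) \<Rightarrow> bool" where
  "lead_exp_is n p e \<longleftrightarrow> e \<in> Poly_Mapping.keys p \<and> (\<forall>m \<in> Poly_Mapping.keys p. m \<noteq> e \<longrightarrow> lex_less n m e)"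

definition Qset :: "nat \<Rightarrow> nat \<Rightarrow> nat \<Rightarrow> ((nat \<Rightarrow>\<^sub>0 nat) \<Rightarrow>\<^sub>0 'k::zero) set" where
  "Qset n \<alpha> \<beta> = {p. in_ring n p \<and> p \<noteq> 0 \<and> deg_w3 n p \<le> \<beta> \<and>
      lead_exp_is n p (Poly_Mapping.single 0 \<alpha> + Poly_Mapping.single 1 \<beta>)}"

definition Rset :: "nat \<Rightarrow> nat \<Rightarrow> nat \<Rightarrow> ((nat \<Rightarrow>\<^sub>0 nat) \<Rightarrow>\<^sub>0 'k::zero) set" where
  "Rset n \<alpha> \<beta> = {p. in_ring n p \<and> p \<noteq> 0 \<and> deg_w3 n p \<le> \<beta> \<and>
      lead_exp_is n p (Poly_Mapping.single 0 \<alpha> + Poly_Mapping.single n \<beta>)}"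

end

theory Submission
  imports Defs
begin

text \<open>The derivation D' replaces one factor x_j of a monomial by x_(j-1): it keeps the
  t-exponent and the x-degree and lowers the weight sum_j j i_j by one. So D' is locally
  nilpotent, and no monomial of exp(d D')(p) has larger t-exponent or x-degree than some
  monomial of p. For p in R_(alpha,beta) this bounds everything by t^alpha and x-degree beta,
  and the coefficient of t^alpha x_1^beta can only come from the leading term t^alpha x_n^beta,
  through the single power D'^((n-1) beta) that takes weight n beta down to beta. That
  coefficient is a positive integer, because D' has natural-number coefficients and x_n^beta
  can be lowered step by step to x_1^beta; in characteristic zero it is therefore nonzero.\<close>

abbreviation exp_var :: "nat \<Rightarrow> nat \<Rightarrow>\<^sub>0 nat" where
  "exp_var j \<equiv> Poly_Mapping.single j 1"

abbreviation exp_t_x1 :: "nat \<Rightarrow> nat \<Rightarrow> nat \<Rightarrow>\<^sub>0 nat" where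
  "exp_t_x1 \<alpha> \<beta> \<equiv> Poly_Mapping.single 0 \<alpha> + Poly_Mapping.single 1 \<beta>"

abbreviation exp_t_xn :: "nat \<Rightarrow> nat \<Rightarrow> nat \<Rightarrow> nat \<Rightarrow>\<^sub>0 nat" where
  "exp_t_xn n \<alpha> \<beta> \<equiv> Poly_Mapping.single 0 \<alpha> + Poly_Mapping.single n \<beta>"

definition x_degree :: "nat \<Rightarrow> (nat \<Rightarrow>\<^sub>0 nat) \<Rightarrow> nat" where
  "x_degree n m = (\<Sum>j \<in> {1..n}. Poly_Mapping.lookup m j)"

definition x_weight :: "nat \<Rightarrow> (nat \<Rightarrow>\<^sub>0 nat) \<Rightarrow> nat" where
  "x_weight n m = (\<Sum>j \<in> {1..n}. j * Poly_Mapping.lookup m j)"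

lemma x_degree_add: "x_degree n (a + b) = x_degree n a + x_degree n b"
  by (simp add: x_degree_def lookup_add sum.distrib)

lemma x_weight_add: "x_weight n (a + b) = x_weight n a + x_weight n b"
  by (simp add: x_weight_def lookup_add sum.distrib distrib_left)

lemma x_degree_single:
  "x_degree n (Poly_Mapping.single k v) = (if 1 \<le> k \<and> k \<le> n then v else 0)"
  unfolding x_degree_def lookup_single when_def
  by (subst sum.cong[OF refl, where h="\<lambda>j. if k = j then v else 0"]) auto

lemma x_weight_single:
  "x_weight n (Poly_Mapping.single k v) = (if 1 \<le> k \<and> k \<le> n then k * v else 0)"
  unfolding x_weight_def lookup_single when_def
  by (subst sum.cong[OF refl, where h="\<lambda>j. if k = j then k * v else 0"]) auto

lemma x_weight_eq_x_degree_plus: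
  "x_weight n m = x_degree n m + (\<Sum>j \<in> {1..n}. (j - 1) * Poly_Mapping.lookup m j)"
proof -
  have "x_weight n m = (\<Sum>j \<in> {1..n}. Poly_Mapping.lookup m j + (j - 1) * Poly_Mapping.lookup m j)"
    unfolding x_weight_def
    by (intro sum.cong refl) (metis One_nat_def Suc_diff_le atLeastAtMost_iff diff_Suc_1 mult_Suc)
  then show ?thesis by (simp add: sum.distrib x_degree_def)
qed

lemma x_degree_eq_lookup_1_plus:
  "1 \<le> n \<Longrightarrow> x_degree n m = Poly_Mapping.lookup m 1 + (\<Sum>j \<in> {2..n}. Poly_Mapping.lookup m j)"
  unfolding x_degree_def by (simp add: sum.atLeast_Suc_atMost numeral_2_eq_2)

lemma add_exp_var_minus:
  "Poly_Mapping.lookup m j \<noteq> 0 \<Longrightarrow> m - exp_var j + exp_var j = m"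
  by (rule poly_mapping_eqI) (auto simp: lookup_add lookup_minus lookup_single when_def)

lemma eq_exp_t_x1I:
  assumes "Poly_Mapping.keys m \<subseteq> {0..n}" "\<forall>j\<in>{2..n}. Poly_Mapping.lookup m j = 0"
  shows "m = exp_t_x1 (Poly_Mapping.lookup m 0) (Poly_Mapping.lookup m 1)"
proof (rule poly_mapping_eqI)
  fix i
  have "Poly_Mapping.lookup m i = 0" if "1 < i" using that assms
    by (cases "i \<le> n") (auto simp: in_keys_iff)
  then show "Poly_Mapping.lookup m i =
      Poly_Mapping.lookup (exp_t_x1 (Poly_Mapping.lookup m 0) (Poly_Mapping.lookup m 1)) i"
    by (cases "i = 0"; cases "i = 1") (auto simp: lookup_add lookup_single when_def)
qed

lemma lookup_single_0_mult:
  "Poly_Mapping.lookup (Poly_Mapping.single 0 c * p) m = (c::'k::comm_ring_1) * Poly_Mapping.lookup p m"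
  unfolding mult_map_scale_conv_mult[symmetric]
  by (simp add: Poly_Mapping.map.rep_eq when_def)

lemma keys_single_0_mult_subset:
  "Poly_Mapping.keys (Poly_Mapping.single 0 (c::'k::comm_ring_1) * p) \<subseteq> Poly_Mapping.keys p"
  by (auto simp: in_keys_iff lookup_single_0_mult)

lemma Dtil_eq_sum_over_superset:
  assumes "finite K" "Poly_Mapping.keys p \<subseteq> K"
  shows "Dtil n p = (\<Sum>m \<in> K. \<Sum>j \<in> {2..n}.
      Poly_Mapping.single (m - exp_var j + exp_var (j - 1))
        (of_nat (j - 1) * of_nat (Poly_Mapping.lookup m j) * Poly_Mapping.lookup p m))"
  unfolding Dtil_def
  by (rule sum.mono_neutral_left) (use assms in \<open>auto simp: in_keys_iff\<close>)

lemma Dtil_add: "Dtil n (p + q) = Dtil n p + Dtil n q"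
proof -
  let ?K = "Poly_Mapping.keys p \<union> Poly_Mapping.keys q"
  have K: "finite ?K" "Poly_Mapping.keys (p + q) \<subseteq> ?K"
    "Poly_Mapping.keys p \<subseteq> ?K" "Poly_Mapping.keys q \<subseteq> ?K"
    using keys_add[of p q] by auto
  show ?thesis
    unfolding Dtil_eq_sum_over_superset[OF K(1,2)] Dtil_eq_sum_over_superset[OF K(1,3)]
      Dtil_eq_sum_over_superset[OF K(1,4)]
    by (simp only: lookup_add distrib_left single_add sum.distrib)
qed

lemma Dtil_single_0_mult:
  "Dtil n (Poly_Mapping.single 0 c * p) = Poly_Mapping.single 0 c * Dtil n p"
proof -
  have "Dtil n (Poly_Mapping.single 0 c * p) = (\<Sum>m \<in> Poly_Mapping.keys p. \<Sum>j \<in> {2..n}.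
      Poly_Mapping.single 0 c * Poly_Mapping.single (m - exp_var j + exp_var (j - 1))
        (of_nat (j - 1) * of_nat (Poly_Mapping.lookup m j) * Poly_Mapping.lookup p m))"
    unfolding Dtil_eq_sum_over_superset[OF finite_keys keys_single_0_mult_subset]
      lookup_single_0_mult mult_single add_0
    by (simp only: mult.left_commute)
  also have "\<dots> = Poly_Mapping.single 0 c * Dtil n p"
    unfolding Dtil_def by (simp add: sum_distrib_left)
  finally show ?thesis .
qed

lemma funpow_Dtil_add: "(Dtil n ^^ i) (p + q) = (Dtil n ^^ i) p + (Dtil n ^^ i) q"
  by (induction i) (simp_all add: Dtil_add)

lemma funpow_Dtil_single_0_mult:
  "(Dtil n ^^ i) (Poly_Mapping.single 0 c * p) = Poly_Mapping.single 0 c * (Dtil n ^^ i) p"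
  by (induction i) (simp_all add: Dtil_single_0_mult)

lemma funpow_scaled_Dtil:
  "((\<lambda>g. Poly_Mapping.single 0 c * Dtil n g) ^^ i) p = Poly_Mapping.single 0 (c ^ i) * (Dtil n ^^ i) p"
  by (induction i) (simp_all add: Dtil_single_0_mult mult_single mult.assoc[symmetric])

definition lowers :: "nat \<Rightarrow> (nat \<Rightarrow>\<^sub>0 nat) \<Rightarrow> (nat \<Rightarrow>\<^sub>0 nat) \<Rightarrow> bool" where
  "lowers n m m' \<longleftrightarrow> (\<exists>u. \<exists>j\<in>{2..n}. m = u + exp_var j \<and> m' = u + exp_var (j - 1))"

lemma keys_Dtil:
  assumes "m' \<in> Poly_Mapping.keys (Dtil n p)"
  shows "\<exists>m\<in>Poly_Mapping.keys p. lowers n m m'"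
proof -
  let ?T = "\<lambda>m j. Poly_Mapping.single (m - exp_var j + exp_var (j - 1))
        (of_nat (j - 1) * of_nat (Poly_Mapping.lookup m j) * Poly_Mapping.lookup p m)"
  obtain m where m: "m \<in> Poly_Mapping.keys p"
    and m1: "m' \<in> Poly_Mapping.keys (\<Sum>j \<in> {2..n}. ?T m j)"
    using subsetD[OF keys_sum assms[unfolded Dtil_def]] by (rule UN_E)
  obtain j where j: "j \<in> {2..n}" and mj: "m' \<in> Poly_Mapping.keys (?T m j)"
    using subsetD[OF keys_sum m1] by (rule UN_E)
  then have mj0: "Poly_Mapping.lookup m j \<noteq> 0" and m': "m' = m - exp_var j + exp_var (j - 1)"
    by (auto split: if_splits)
  from mj0 have "m = (m - exp_var j) + exp_var j" by (rule add_exp_var_minus[symmetric])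
  then show ?thesis using m j m' unfolding lowers_def by blast
qed

lemma keys_funpow_Dtil:
  "m' \<in> Poly_Mapping.keys ((Dtil n ^^ i) p) \<Longrightarrow> \<exists>m\<in>Poly_Mapping.keys p. (lowers n ^^ i) m m'"
proof (induction i arbitrary: m')
  case (Suc i)
  then obtain m1 where "m1 \<in> Poly_Mapping.keys ((Dtil n ^^ i) p)" "lowers n m1 m'"
    using keys_Dtil by fastforce
  then show ?case using Suc.IH relpowp_Suc_I by metis
qed simp

lemma lowers_invariants:
  assumes "lowers n m m'"
  shows "Poly_Mapping.lookup m' 0 = Poly_Mapping.lookup m 0"
    and "x_degree n m' = x_degree n m"
    and "x_weight n m' + 1 = x_weight n m"
    and "Poly_Mapping.keys m \<subseteq> {0..n} \<Longrightarrow> Poly_Mapping.keys m' \<subseteq> {0..n}"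
proof -
  obtain u j where j: "2 \<le> j" "j \<le> n" and m: "m = u + exp_var j" and m': "m' = u + exp_var (j - 1)"
    using assms unfolding lowers_def by auto
  have j': "1 \<le> j - 1" "j - 1 \<le> n" using j by arith+
  show "Poly_Mapping.lookup m' 0 = Poly_Mapping.lookup m 0"
    using j by (simp add: m m' lookup_add lookup_single)
  show "x_degree n m' = x_degree n m"
    using j j' by (simp add: m m' x_degree_add x_degree_single)
  show "x_weight n m' + 1 = x_weight n m"
    using j j' by (simp add: m m' x_weight_add x_weight_single)
  show "Poly_Mapping.keys m' \<subseteq> {0..n}" if "Poly_Mapping.keys m \<subseteq> {0..n}"
  proof -
    have "Poly_Mapping.keys u \<subseteq> {0..n}"
      using that by (auto simp: m in_keys_iff lookup_add)
    then show ?thesis using j keys_add[of u "exp_var (j - 1)"] by (auto simp: m')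
  qed
qed

lemma relpowp_lowers_invariants:
  assumes "(lowers n ^^ i) m m'"
  shows "Poly_Mapping.lookup m' 0 = Poly_Mapping.lookup m 0 \<and> x_degree n m' = x_degree n m \<and>
    x_weight n m' + i = x_weight n m \<and>
    (Poly_Mapping.keys m \<subseteq> {0..n} \<longrightarrow> Poly_Mapping.keys m' \<subseteq> {0..n})"
  using assms
proof (induction i arbitrary: m')
  case (Suc i)
  then obtain m1 where "(lowers n ^^ i) m m1" "lowers n m1 m'"
    by (auto elim: relpowp_Suc_E)
  then show ?case using Suc.IH lowers_invariants[of n m1 m'] by fastforce
qed simp

lemma funpow_Dtil_eq_0:
  assumes "\<forall>m\<in>Poly_Mapping.keys p. x_weight n m < i"
  shows "(Dtil n ^^ i) p = 0"
proof -
  have "m' \<notin> Poly_Mapping.keys ((Dtil n ^^ i) p)" for m'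
    using keys_funpow_Dtil relpowp_lowers_invariants assms by fastforce
  then have "Poly_Mapping.keys ((Dtil n ^^ i) p) = {}" by blast
  then show ?thesis by simp
qed

lemma eps_til_eq_sum_atMost:
  assumes "\<forall>m\<in>Poly_Mapping.keys p. x_weight n m \<le> W"
  shows "eps_til n c p = (\<Sum>i\<le>W. Poly_Mapping.single 0 (c ^ i / fact i) * (Dtil n ^^ i) p)"
proof -
  have coeff: "Poly_Mapping.single 0 (1 / fact i) * (Poly_Mapping.single 0 (c ^ i) * (Dtil n ^^ i) p)
      = Poly_Mapping.single 0 (c ^ i / fact i) * (Dtil n ^^ i) p" for i
    by (simp only: mult.assoc[symmetric] mult_single add_0) simp
  have "(Dtil n ^^ i) p = 0" if "W < i" for i
    using assms that by (intro funpow_Dtil_eq_0) auto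
  then have "{i. Poly_Mapping.single 0 (c ^ i) * (Dtil n ^^ i) p \<noteq> 0} \<subseteq> {..W}"
    by (auto simp: not_le[symmetric])
  then show ?thesis
    unfolding eps_til_def expder_def funpow_scaled_Dtil coeff[symmetric]
    by (rule sum.mono_neutral_left[OF finite_atMost]) simp
qed

lemma keys_eps_til:
  assumes "m' \<in> Poly_Mapping.keys (eps_til n c p)"
  shows "\<exists>m\<in>Poly_Mapping.keys p. \<exists>i. (lowers n ^^ i) m m'"
proof -
  define W where "W = Max (x_weight n ` Poly_Mapping.keys p)"
  have "\<forall>m\<in>Poly_Mapping.keys p. x_weight n m \<le> W" by (simp add: W_def)
  from subsetD[OF keys_sum assms[unfolded eps_til_eq_sum_atMost[OF this]]] obtain i
    where "m' \<in> Poly_Mapping.keys (Poly_Mapping.single 0 (c ^ i / fact i) * (Dtil n ^^ i) p)"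
    by blast
  then have "m' \<in> Poly_Mapping.keys ((Dtil n ^^ i) p)"
    by (rule subsetD[OF keys_single_0_mult_subset])
  then show ?thesis by (blast dest: keys_funpow_Dtil)
qed

definition nat_coeffs :: "((nat \<Rightarrow>\<^sub>0 nat) \<Rightarrow>\<^sub>0 'k::semiring_1) \<Rightarrow> bool" where
  "nat_coeffs p \<longleftrightarrow> (\<forall>m. \<exists>k. Poly_Mapping.lookup p m = of_nat k)"

lemma lookup_Dtil_of_nat:
  assumes "\<And>m. Poly_Mapping.lookup p m = of_nat (f m)"
  shows "Poly_Mapping.lookup (Dtil n p) m' = of_nat (\<Sum>m \<in> Poly_Mapping.keys p. \<Sum>j \<in> {2..n}.
      if m - exp_var j + exp_var (j - 1) = m' then (j - 1) * Poly_Mapping.lookup m j * f m else 0)"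
  unfolding Dtil_def lookup_sum of_nat_sum
  by (intro sum.cong refl) (auto simp: lookup_single when_def assms)

lemma nat_coeffs_Dtil:
  assumes "nat_coeffs p"
  shows "nat_coeffs (Dtil n p)"
proof -
  obtain f where "\<And>m. Poly_Mapping.lookup p m = of_nat (f m)"
    using assms unfolding nat_coeffs_def by metis
  then show ?thesis unfolding nat_coeffs_def by (blast intro: lookup_Dtil_of_nat)
qed

lemma nat_coeffs_funpow_Dtil: "nat_coeffs p \<Longrightarrow> nat_coeffs ((Dtil n ^^ i) p)"
  by (induction i) (simp_all add: nat_coeffs_Dtil)

lemma lowers_in_keys_Dtil:
  assumes "nat_coeffs p" "lowers n m m'" "m \<in> Poly_Mapping.keys p"
  shows "m' \<in> Poly_Mapping.keys (Dtil n p)"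
proof -
  obtain f where f: "\<And>m. Poly_Mapping.lookup p m = of_nat (f m)"
    using assms(1) unfolding nat_coeffs_def by metis
  obtain u j where j: "j \<in> {2..n}" and m: "m = u + exp_var j" and m': "m' = u + exp_var (j - 1)"
    using assms(2) unfolding lowers_def by blast
  let ?g = "\<lambda>m j'. if m - exp_var j' + exp_var (j' - 1) = m'
    then (j' - 1) * Poly_Mapping.lookup m j' * f m else 0"
  have "0 < ?g m j"
    using assms(3) j f by (auto simp: m m' in_keys_iff lookup_add)
  also have "?g m j \<le> (\<Sum>j' \<in> {2..n}. ?g m j')"
    by (rule member_le_sum) (use j in auto)
  also have "\<dots> \<le> (\<Sum>m \<in> Poly_Mapping.keys p. \<Sum>j' \<in> {2..n}. ?g m j')"
    by (rule member_le_sum[where f="\<lambda>m. \<Sum>j' \<in> {2..n}. ?g m j'"]) (use assms(3) in auto)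
  finally show ?thesis
    unfolding in_keys_iff lookup_Dtil_of_nat[OF f] of_nat_eq_0_iff by (rule gr_implies_not0)
qed

lemma relpowp_lowers_in_keys_funpow_Dtil:
  assumes "nat_coeffs p" "m \<in> Poly_Mapping.keys p"
  shows "(lowers n ^^ i) m m' \<Longrightarrow> m' \<in> Poly_Mapping.keys ((Dtil n ^^ i) p)"
proof (induction i arbitrary: m')
  case (Suc i)
  then obtain m1 where "(lowers n ^^ i) m m1" "lowers n m1 m'"
    by (auto elim: relpowp_Suc_E)
  then show ?case
    using Suc.IH lowers_in_keys_Dtil[OF nat_coeffs_funpow_Dtil[OF assms(1)]] by simp
qed (use assms(2) in simp)

lemma relpowp_lowers_to_exp_t_x1:
  assumes "1 \<le> n"
  shows "Poly_Mapping.keys m \<subseteq> {0..n} \<Longrightarrow> x_weight n m = x_degree n m + k \<Longrightarrow>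
    (lowers n ^^ k) m (exp_t_x1 (Poly_Mapping.lookup m 0) (x_degree n m))"
proof (induction k arbitrary: m)
  case 0
  then have "\<forall>j\<in>{1..n}. (j - 1) * Poly_Mapping.lookup m j = 0"
    using x_weight_eq_x_degree_plus[of n m] by simp
  then have "\<forall>j\<in>{2..n}. Poly_Mapping.lookup m j = 0"
    by (metis One_nat_def atLeastAtMost_iff diff_is_0_eq mult_eq_0_iff not_less_eq_eq
        numeral_2_eq_2 order.trans one_le_numeral)
  then show ?case
    using eq_exp_t_x1I[OF "0.prems"(1)] x_degree_eq_lookup_1_plus[OF assms, of m] by simp
next
  case (Suc k)
  then have "(\<Sum>j \<in> {1..n}. (j - 1) * Poly_Mapping.lookup m j) \<noteq> 0"
    using x_weight_eq_x_degree_plus[of n m] by simp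
  then obtain j where "j \<in> {1..n}" "(j - 1) * Poly_Mapping.lookup m j \<noteq> 0"
    by (rule sum.not_neutral_contains_not_neutral)
  then have j: "j \<in> {2..n}" and mj: "Poly_Mapping.lookup m j \<noteq> 0" by simp_all
  let ?m1 = "m - exp_var j + exp_var (j - 1)"
  have low: "lowers n m ?m1"
    unfolding lowers_def using j add_exp_var_minus[OF mj] by metis
  note inv = lowers_invariants[OF low]
  have "(lowers n ^^ k) ?m1 (exp_t_x1 (Poly_Mapping.lookup ?m1 0) (x_degree n ?m1))"
    using Suc.prems inv by (intro Suc.IH) auto
  then show ?case using relpowp_Suc_I2[where P="lowers n", OF low] inv(1,2) by simp
qed

lemma lex_less_exp_t_x1:
  assumes "1 \<le> n" "Poly_Mapping.keys m \<subseteq> {0..n}" "Poly_Mapping.lookup m 0 \<le> \<alpha>"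
    "x_degree n m \<le> \<beta>" "m \<noteq> exp_t_x1 \<alpha> \<beta>"
  shows "lex_less n m (exp_t_x1 \<alpha> \<beta>)"
proof -
  have q0: "Poly_Mapping.lookup (exp_t_x1 \<alpha> \<beta>) 0 = \<alpha>"
    and q1: "Poly_Mapping.lookup (exp_t_x1 \<alpha> \<beta>) 1 = \<beta>"
    by (simp_all add: lookup_add lookup_single)
  consider "Poly_Mapping.lookup m 0 < \<alpha>"
    | "Poly_Mapping.lookup m 0 = \<alpha>" "Poly_Mapping.lookup m 1 < \<beta>"
    | "Poly_Mapping.lookup m 0 = \<alpha>" "Poly_Mapping.lookup m 1 = \<beta>"
      "\<forall>j\<in>{2..n}. Poly_Mapping.lookup m j = 0"
  proof (cases "Poly_Mapping.lookup m 0 < \<alpha> \<or> Poly_Mapping.lookup m 1 < \<beta>")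
    case False
    then have "Poly_Mapping.lookup m 1 = \<beta>" "(\<Sum>j \<in> {2..n}. Poly_Mapping.lookup m j) = 0"
      using assms(4) x_degree_eq_lookup_1_plus[OF assms(1), of m] by linarith+
    then show ?thesis using False assms(3) that by simp
  qed (use assms(3) that in fastforce)
  then show ?thesis
  proof cases
    case 1
    then show ?thesis unfolding lex_less_def using q0 by (intro exI[of _ 0]) auto
  next
    case 2
    then show ?thesis unfolding lex_less_def using q0 q1 assms(1) by (intro exI[of _ 1]) auto
  next
    case 3
    then show ?thesis using eq_exp_t_x1I[OF assms(2)] assms(5) by simp
  qed
qed

lemma lex_less_exp_t_xnD:
  assumes "1 \<le> n" "lex_less n m (exp_t_xn n \<alpha> \<beta>)"
  shows "Poly_Mapping.lookup m 0 < \<alpha> \<or> Poly_Mapping.lookup m 0 = \<alpha> \<and> x_degree n m < \<beta>"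
proof -
  have R: "Poly_Mapping.lookup (exp_t_xn n \<alpha> \<beta>) i = (if i = 0 then \<alpha> else if i = n then \<beta> else 0)" for i
    using assms(1) by (auto simp: lookup_add lookup_single when_def)
  obtain i where i: "i \<le> n" "Poly_Mapping.lookup m i < Poly_Mapping.lookup (exp_t_xn n \<alpha> \<beta>) i"
    "\<forall>j<i. Poly_Mapping.lookup m j = Poly_Mapping.lookup (exp_t_xn n \<alpha> \<beta>) j"
    using assms(2) unfolding lex_less_def by blast
  show ?thesis
  proof (cases "i = 0")
    case False
    then have "i = n" using i R[of i] by (auto split: if_splits)
    then have m0: "Poly_Mapping.lookup m 0 = \<alpha>" and mn: "Poly_Mapping.lookup m n < \<beta>"
      and z: "\<forall>j\<in>{1..n}. j \<noteq> n \<longrightarrow> Poly_Mapping.lookup m j = 0"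
      using i R assms(1) False by auto
    have "x_degree n m = (\<Sum>j \<in> {1..n}. if j = n then Poly_Mapping.lookup m n else 0)"
      unfolding x_degree_def using z by (intro sum.cong refl) auto
    then show ?thesis using m0 mn assms(1) by simp
  qed (use i R in simp)
qed

lemma Rset_keysD:
  assumes "1 \<le> n" "p \<in> Rset n \<alpha> \<beta>" "m \<in> Poly_Mapping.keys p"
  shows "Poly_Mapping.keys m \<subseteq> {0..n}" and "Poly_Mapping.lookup m 0 \<le> \<alpha>"
    and "x_degree n m \<le> \<beta>"
    and "m \<noteq> exp_t_xn n \<alpha> \<beta> \<Longrightarrow> Poly_Mapping.lookup m 0 < \<alpha> \<or> x_degree n m < \<beta>"
proof -
  have ring: "in_ring n p" and deg: "deg_w3 n p \<le> \<beta>" and lead: "lead_exp_is n p (exp_t_xn n \<alpha> \<beta>)"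
    using assms(2) unfolding Rset_def by auto
  show "Poly_Mapping.keys m \<subseteq> {0..n}"
    using ring assms(3) unfolding in_ring_def by blast
  show "x_degree n m \<le> \<beta>"
    using deg assms(3) unfolding deg_w3_def x_degree_def[symmetric]
    by (meson Max_ge finite_imageI finite_keys imageI order.trans)
  have lex: "Poly_Mapping.lookup m 0 < \<alpha> \<or> Poly_Mapping.lookup m 0 = \<alpha> \<and> x_degree n m < \<beta>"
    if "m \<noteq> exp_t_xn n \<alpha> \<beta>"
    using lead assms(3) that lex_less_exp_t_xnD[OF assms(1)] unfolding lead_exp_is_def by blast
  then show "m \<noteq> exp_t_xn n \<alpha> \<beta> \<Longrightarrow> Poly_Mapping.lookup m 0 < \<alpha> \<or> x_degree n m < \<beta>"
    by blast
  have "Poly_Mapping.lookup (exp_t_xn n \<alpha> \<beta>) 0 = \<alpha>"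
    using assms(1) by (simp add: lookup_add lookup_single)
  then show "Poly_Mapping.lookup m 0 \<le> \<alpha>"
    using lex by (cases "m = exp_t_xn n \<alpha> \<beta>") auto
qed

lemma keys_eps_til_Rset:
  assumes "1 \<le> n" "p \<in> Rset n \<alpha> \<beta>" "m' \<in> Poly_Mapping.keys (eps_til n c p)"
  shows "Poly_Mapping.keys m' \<subseteq> {0..n} \<and> Poly_Mapping.lookup m' 0 \<le> \<alpha> \<and> x_degree n m' \<le> \<beta>"
proof -
  obtain m i where "m \<in> Poly_Mapping.keys p" "(lowers n ^^ i) m m'"
    using keys_eps_til[OF assms(3)] by blast
  then show ?thesis
    using Rset_keysD[OF assms(1,2)] relpowp_lowers_invariants by metis
qed

lemma lookup_funpow_Dtil_Rset:
  assumes "1 \<le> n" "p \<in> Rset n \<alpha> \<beta>"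
  shows "Poly_Mapping.lookup ((Dtil n ^^ i) p) (exp_t_x1 \<alpha> \<beta>) =
    Poly_Mapping.lookup p (exp_t_xn n \<alpha> \<beta>) *
    Poly_Mapping.lookup ((Dtil n ^^ i) (Poly_Mapping.single (exp_t_xn n \<alpha> \<beta>) 1)) (exp_t_x1 \<alpha> \<beta>)"
proof -
  define a where "a = Poly_Mapping.lookup p (exp_t_xn n \<alpha> \<beta>)"
  define r where "r = p - Poly_Mapping.single (exp_t_xn n \<alpha> \<beta>) a"
  have p: "p = Poly_Mapping.single 0 a * Poly_Mapping.single (exp_t_xn n \<alpha> \<beta>) 1 + r"
    by (simp add: r_def mult_single)
  have "exp_t_x1 \<alpha> \<beta> \<notin> Poly_Mapping.keys ((Dtil n ^^ i) r)"
  proof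
    assume "exp_t_x1 \<alpha> \<beta> \<in> Poly_Mapping.keys ((Dtil n ^^ i) r)"
    then obtain m where m: "m \<in> Poly_Mapping.keys r" and "(lowers n ^^ i) m (exp_t_x1 \<alpha> \<beta>)"
      using keys_funpow_Dtil by blast
    then have "Poly_Mapping.lookup m 0 = \<alpha>" "x_degree n m = \<beta>"
      using relpowp_lowers_invariants assms(1)
      by (fastforce simp: lookup_add lookup_single x_degree_add x_degree_single)+
    moreover have "m \<in> Poly_Mapping.keys p" "m \<noteq> exp_t_xn n \<alpha> \<beta>"
      using m by (auto simp: r_def a_def in_keys_iff lookup_minus lookup_single when_def
          split: if_splits)
    ultimately show False using Rset_keysD(4)[OF assms] by fastforce
  qed
  then show ?thesis
    by (subst p) (simp add: funpow_Dtil_add funpow_Dtil_single_0_mult lookup_add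
        lookup_single_0_mult a_def in_keys_iff)
qed

lemma lookup_funpow_Dtil_exp_t_xn_eq_0_iff:
  assumes "1 \<le> n"
  shows "Poly_Mapping.lookup ((Dtil n ^^ i) (Poly_Mapping.single (exp_t_xn n \<alpha> \<beta>) (1::'k::field_char_0)))
      (exp_t_x1 \<alpha> \<beta>) \<noteq> 0 \<longleftrightarrow> i = (n - 1) * \<beta>"
proof -
  let ?R = "exp_t_xn n \<alpha> \<beta>" and ?Q = "exp_t_x1 \<alpha> \<beta>"
  have "Poly_Mapping.keys ?R \<subseteq> {0, n}"
    using keys_add[of "Poly_Mapping.single 0 \<alpha>" "Poly_Mapping.single n \<beta>"]
    by (auto split: if_splits)
  then have R: "Poly_Mapping.keys ?R \<subseteq> {0..n}" "Poly_Mapping.lookup ?R 0 = \<alpha>"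
    "x_degree n ?R = \<beta>" "x_weight n ?R = n * \<beta>"
    using assms by (auto simp: lookup_add lookup_single x_degree_add x_degree_single
        x_weight_add x_weight_single)
  have Q: "x_weight n ?Q = \<beta>"
    using assms by (simp add: x_weight_add x_weight_single)
  have "?Q \<in> Poly_Mapping.keys ((Dtil n ^^ i) (Poly_Mapping.single ?R (1::'k))) \<longleftrightarrow>
      i = (n - 1) * \<beta>"
  proof
    assume "?Q \<in> Poly_Mapping.keys ((Dtil n ^^ i) (Poly_Mapping.single ?R (1::'k)))"
    then have "(lowers n ^^ i) ?R ?Q" using keys_funpow_Dtil by fastforce
    then have "\<beta> + i = n * \<beta>" using relpowp_lowers_invariants Q R(4) by metis
    then show "i = (n - 1) * \<beta>" by (simp add: diff_mult_distrib)
  next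
    assume i: "i = (n - 1) * \<beta>"
    have "x_weight n ?R = x_degree n ?R + i"
      using R(3,4) assms by (simp add: i diff_mult_distrib)
    then have "(lowers n ^^ i) ?R ?Q"
      using relpowp_lowers_to_exp_t_x1[OF assms R(1)] R(2,3) by simp
    moreover have "nat_coeffs (Poly_Mapping.single ?R (1::'k))"
      unfolding nat_coeffs_def lookup_single when_def by (metis of_nat_0 of_nat_1)
    ultimately show "?Q \<in> Poly_Mapping.keys ((Dtil n ^^ i) (Poly_Mapping.single ?R (1::'k)))"
      using relpowp_lowers_in_keys_funpow_Dtil by fastforce
  qed
  then show ?thesis by (simp add: in_keys_iff)
qed

lemma lookup_eps_til_Rset_exp_t_x1:
  fixes c :: "'k::field_char_0"
  assumes "1 \<le> n" "c \<noteq> 0" "p \<in> Rset n \<alpha> \<beta>"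
  shows "Poly_Mapping.lookup (eps_til n c p) (exp_t_x1 \<alpha> \<beta>) \<noteq> 0"
proof -
  define a where "a = Poly_Mapping.lookup p (exp_t_xn n \<alpha> \<beta>)"
  define K where "K i = Poly_Mapping.lookup
    ((Dtil n ^^ i) (Poly_Mapping.single (exp_t_xn n \<alpha> \<beta>) (1::'k))) (exp_t_x1 \<alpha> \<beta>)" for i
  define N where "N = (n - 1) * \<beta>"
  define W where "W = Max (x_weight n ` Poly_Mapping.keys p)"
  have W: "\<forall>m\<in>Poly_Mapping.keys p. x_weight n m \<le> W" by (simp add: W_def)
  have R: "exp_t_xn n \<alpha> \<beta> \<in> Poly_Mapping.keys p"
    using assms(3) unfolding Rset_def lead_exp_is_def by blast
  then have "a \<noteq> 0" by (simp add: a_def in_keys_iff)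
  have "n * \<beta> \<le> W"
    using W R assms(1) by (force simp: x_weight_add x_weight_single)
  then have "N \<le> W" by (simp add: N_def diff_mult_distrib)
  have K: "K i \<noteq> 0 \<longleftrightarrow> i = N" for i
    unfolding K_def N_def by (rule lookup_funpow_Dtil_exp_t_xn_eq_0_iff[OF assms(1)])
  have "Poly_Mapping.lookup (eps_til n c p) (exp_t_x1 \<alpha> \<beta>) = (\<Sum>i\<le>W. c ^ i / fact i * (a * K i))"
    unfolding eps_til_eq_sum_atMost[OF W] lookup_sum lookup_single_0_mult
      lookup_funpow_Dtil_Rset[OF assms(1,3)] a_def K_def ..
  also have "\<dots> = (\<Sum>i\<le>W. if i = N then c ^ N / fact N * (a * K N) else 0)"
    using K by (intro sum.cong) auto
  also have "\<dots> = c ^ N / fact N * (a * K N)"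
    using \<open>N \<le> W\<close> by simp
  also have "\<dots> \<noteq> 0"
    using \<open>a \<noteq> 0\<close> assms(2) K by simp
  finally show ?thesis .
qed

lemma eps_til_Rset_subset_Qset:
  assumes "1 \<le> n" "c \<noteq> 0"
  shows "eps_til n c ` Rset n \<alpha> \<beta> \<subseteq> Qset n \<alpha> \<beta>"
proof
  fix q assume "q \<in> eps_til n c ` Rset n \<alpha> \<beta>"
  then obtain p where p: "p \<in> Rset n \<alpha> \<beta>" and q: "q = eps_til n c p" by blast
  have keys: "Poly_Mapping.keys m \<subseteq> {0..n}" "Poly_Mapping.lookup m 0 \<le> \<alpha>" "x_degree n m \<le> \<beta>"
    if "m \<in> Poly_Mapping.keys q" for m
    using keys_eps_til_Rset[OF assms(1) p] that by (simp_all add: q)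
  have lead: "exp_t_x1 \<alpha> \<beta> \<in> Poly_Mapping.keys q"
    using lookup_eps_til_Rset_exp_t_x1[OF assms p] by (simp add: q in_keys_iff)
  then have "q \<noteq> 0" by auto
  moreover have "deg_w3 n q \<le> \<beta>"
    using keys lead unfolding deg_w3_def x_degree_def[symmetric] by (intro Max.boundedI) auto
  moreover have "lead_exp_is n q (exp_t_x1 \<alpha> \<beta>)"
    using keys lead lex_less_exp_t_x1[OF assms(1)] unfolding lead_exp_is_def by blast
  ultimately show "q \<in> Qset n \<alpha> \<beta>"
    using keys unfolding Qset_def in_ring_def by blast
qed

theorem lemma5p2:
  fixes n \<alpha> \<beta> :: nat and d :: int
  assumes "n \<ge> 3" and "\<alpha> \<ge> 1" and "\<beta> \<ge> 1" and "d \<noteq> 0"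
  shows "eps_til n (of_int d :: 'k::field_char_0) ` Rset n \<alpha> \<beta> \<subseteq> Qset n \<alpha> \<beta>"
  using assms(1,4) by (intro eps_til_Rset_subset_Qset) auto

end
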